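(* Let $r>1$, $p\in(0,1)$, $q=1-p$, and $z>1$. Let $g_z:\mathbb{Z}_+\to\mathbb{R}$ be defined by $g_z(0)=0$ and, for $k\ge 1$, $$g_z(k)=-\sum_{j=k}^{\infty}\frac{r(r+1)\cdots(r+j-1)}{r(r+1)\cdots(r+k-1)}\,\frac{(k-1)!}{j!}\,q^{j-k}\Big[(j-z)^+-\mathbb{E}[(\mathrm{N}_{r,p}-z)^+]\Big].$$ Then for every integer $k\ge 1$, $$|\Delta g_z(k)|\le\begin{cases}\frac{1}{z}\left(2p^{-(r+1)}-p^{-1}\right) & \text{if } k\ge z,\\[2pt] \frac{1}{z}\left((1+q^{-1})p^{-(r+2)}-p^{-2}\right) & \text{if } 2\le k<z,\\[2pt] \frac{r+1}{z}\left(2p^{-(r+2)}-p^{-2}\right) & \text{if } k=1.\end{cases}$$ In particular, for all $k\ge1$, $|\Delta g_z(k)|\le \vartheta_{r,p,z}:=\frac{r+1}{z}\left((1+q^{-1})p^{-(r+2)}-p^{-2}\right)$.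
   Context: $\mathbb{Z}_+=\{0,1,2,\ldots\}$. $x^+=\max\{x,0\}$. $\mathrm{N}_{r,p}$ denotes a negative binomial random variable with $\mathbb{P}(\mathrm{N}_{r,p}=k)=\binom{r+k-1}{k}p^rq^k=\frac{\Gamma(r+k)}{k!\,\Gamma(r)}p^rq^k$ for $k\in\mathbb{Z}_+$, where $r>1$ and $q=1-p\in(0,1)$. $\Delta g(k)=g(k+1)-g(k)$ is the forward difference. *)

theory Defs
  imports "HOL-Analysis.Analysis"
begin

definition nb_pmf :: "real \<Rightarrow> real \<Rightarrow> nat \<Rightarrow> real" where
  "nb_pmf r p k = Gamma (r + real k) / (fact k * Gamma r) * p powr r * (1 - p) ^ k"

definition nb_excess :: "real \<Rightarrow> real \<Rightarrow> real \<Rightarrow> real" where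
  "nb_excess r p z = (\<Sum>j. nb_pmf r p j * max (real j - z) 0)"

definition g_term :: "real \<Rightarrow> real \<Rightarrow> real \<Rightarrow> nat \<Rightarrow> nat \<Rightarrow> real" where
  "g_term r p z k j = pochhammer r j / pochhammer r k * (fact (k - 1) / fact j)
      * (1 - p) ^ (j - k) * (max (real j - z) 0 - nb_excess r p z)"

definition g_z :: "real \<Rightarrow> real \<Rightarrow> real \<Rightarrow> nat \<Rightarrow> real" where
  "g_z r p z k = (if k = 0 then 0 else - (\<Sum>i. g_term r p z k (k + i)))"

end

theory Submission
  imports Defs
begin

(*
  Write P_j for the negative binomial weights, q = 1 - p, T(n) = P(N >= n) and c = E(N - z)^+.
  Unfolding the definition, k P_k g_z(k) = c T(k) - E[(N - z)^+; N >= k]. For k <= z + 1 this is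
  -c (1 - T(k)); for k >= z the identity (j + 1) P_(j+1) = (r + j) q P_j, summed over j >= k,
  turns it into -k P_k / p - mu T(k) with |mu| <= z. In both regimes Delta g_z(k) is thus a
  multiple of p (A (k - EN) + E(N - k)^+) / (k (k + 1) P_(k+1)), with A = 1 resp. A = 0.
  For r >= 1 the tail ratios P_(k+1+i) / P_(k+1) are dominated termwise by the coefficients of
  the binomial series sum_i (s)_i q^i / i! = p^(-s), s = r + 1, r + 2, and this yields
  |Delta g_z(k)| <= p^(-(r+1)) / z for all k >= 1, which is below each of the stated bounds.
*)

lemma negative_binomial_series:
  fixes p s :: real
  assumes "0 < p" "p < 1"
  shows "(\<lambda>n. pochhammer s n / fact n * (1 - p) ^ n) sums p powr (- s)"
proof -
  have "(\<lambda>n. ((- s) gchoose n) * (p - 1) ^ n) sums (1 + (p - 1)) powr (- s)"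
    by (rule gen_binomial_real) (use assms in auto)
  moreover have "((- s) gchoose n) * (p - 1) ^ n = pochhammer s n / fact n * (1 - p) ^ n" for n
    by (simp add: gbinomial_pochhammer power_mult_distrib[symmetric])
  ultimately show ?thesis by simp
qed

lemma pochhammer_shift_mono:
  fixes x y a :: real
  assumes "0 < y" "y \<le> x" "0 \<le> a"
  shows "pochhammer (x + a) n * pochhammer y n \<le> pochhammer x n * pochhammer (y + a) n"
proof (induction n)
  case (Suc n)
  have "(x + a + real n) * (y + real n) \<le> (x + real n) * (y + a + real n)"
    using assms by (simp add: algebra_simps mult_left_mono)
  with Suc.IH
  have "(pochhammer (x + a) n * pochhammer y n) * ((x + a + real n) * (y + real n))
      \<le> (pochhammer x n * pochhammer (y + a) n) * ((x + real n) * (y + a + real n))"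
    by (rule mult_mono) (use assms in \<open>auto intro!: mult_nonneg_nonneg pochhammer_nonneg\<close>)
  then show ?case by (simp add: pochhammer_Suc ac_simps)
qed simp

lemma sums_comparison:
  fixes f g :: "nat \<Rightarrow> real"
  assumes "\<And>i. 0 \<le> f i" "\<And>i. f i \<le> g i" "g sums s"
  shows "summable f" "suminf f \<le> s"
proof -
  show "summable f"
    using assms by (intro summable_comparison_test[OF _ sums_summable[OF assms(3)]]) auto
  then show "suminf f \<le> s"
    using assms by (intro sums_le[OF _ summable_sums]) auto
qed

lemma powr_minus_mult_self:
  fixes p r :: real
  assumes "0 < p"
  shows "p * p powr (- (r + 2)) = p powr (- (r + 1))"
  using assms by (simp add: powr_mult_base algebra_simps)

definition nb_tail :: "real \<Rightarrow> real \<Rightarrow> nat \<Rightarrow> real" where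
  "nb_tail r p n = (\<Sum>i. nb_pmf r p (n + i))"

context
  fixes r p :: real
  assumes r_pos: "0 < r" and p_pos: "0 < p" and p_less_1: "p < 1"
begin

lemma nb_pmf_eq: "nb_pmf r p j = p powr r * (pochhammer r j / fact j * (1 - p) ^ j)"
proof -
  have "r \<notin> \<int>\<^sub>\<le>\<^sub>0"
    using r_pos nonpos_Ints_nonpos by force
  then show ?thesis
    by (simp add: nb_pmf_def pochhammer_Gamma field_simps)
qed

lemma nb_pmf_pos: "0 < nb_pmf r p j"
  using r_pos p_pos p_less_1 by (simp add: nb_pmf_eq pochhammer_pos)

lemma nb_pmf_nonneg: "0 \<le> nb_pmf r p j"
  using nb_pmf_pos less_imp_le by blast

lemma nb_pmf_sums: "nb_pmf r p sums 1"
proof -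
  have "(\<lambda>j. p powr r * (pochhammer r j / fact j * (1 - p) ^ j)) sums (p powr r * p powr (- r))"
    by (intro sums_mult negative_binomial_series p_pos p_less_1)
  moreover have "p powr r * p powr (- r) = 1"
    using p_pos by (simp add: powr_minus)
  ultimately show ?thesis
    by (simp add: nb_pmf_eq[abs_def])
qed

lemma nb_pmf_Suc: "real (Suc j) * nb_pmf r p (Suc j) = (r + real j) * (1 - p) * nb_pmf r p j"
proof -
  have "fact (Suc j) = real (Suc j) * fact j"
    by simp
  then show ?thesis
    unfolding nb_pmf_eq pochhammer_Suc power_Suc2 by (simp add: divide_simps)
qed

lemma nb_pmf_shift:
  "nb_pmf r p (m + i) * pochhammer (real m + 1) i = nb_pmf r p m * pochhammer (r + real m) i * (1 - p) ^ i"
proof (induction i)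
  case (Suc i)
  have "nb_pmf r p (m + Suc i) * pochhammer (real m + 1) (Suc i)
      = real (Suc (m + i)) * nb_pmf r p (Suc (m + i)) * pochhammer (real m + 1) i"
    by (simp add: pochhammer_Suc algebra_simps)
  also have "\<dots> = (r + real m + real i) * (1 - p) * (nb_pmf r p (m + i) * pochhammer (real m + 1) i)"
    by (simp only: nb_pmf_Suc of_nat_add add.assoc ac_simps)
  also have "\<dots> = (r + real m + real i) * (1 - p) * (nb_pmf r p m * pochhammer (r + real m) i * (1 - p) ^ i)"
    by (simp only: Suc.IH)
  also have "\<dots> = nb_pmf r p m * pochhammer (r + real m) (Suc i) * (1 - p) ^ Suc i"
    by (simp add: pochhammer_Suc algebra_simps)
  finally show ?case .
qed simp

lemma nb_mean_sums: "(\<lambda>j. nb_pmf r p j * real j) sums ((1 - p) * r / p)"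
proof -
  have "nb_pmf r p (Suc i) * real (Suc i)
      = (1 - p) * r * p powr r * (pochhammer (r + 1) i / fact i * (1 - p) ^ i)" for i
  proof -
    have "(r + real i) * pochhammer r i = r * pochhammer (r + 1) i"
      by (metis pochhammer_rec pochhammer_rec')
    with nb_pmf_Suc[of i] show ?thesis
      by (simp add: nb_pmf_eq mult.commute mult.left_commute)
  qed
  moreover have "(\<lambda>i. (1 - p) * r * p powr r * (pochhammer (r + 1) i / fact i * (1 - p) ^ i))
      sums ((1 - p) * r * p powr r * p powr (- (r + 1)))"
    by (intro sums_mult negative_binomial_series p_pos p_less_1)
  moreover have "p powr r * p powr (- (r + 1)) = 1 / p"
    using p_pos by (simp add: powr_add[symmetric] powr_minus_divide)
  then have "(1 - p) * r * p powr r * p powr (- (r + 1)) = (1 - p) * r / p"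
    by (simp add: mult.assoc)
  ultimately have "(\<lambda>i. nb_pmf r p (Suc i) * real (Suc i)) sums ((1 - p) * r / p)"
    by (simp only:)
  then show ?thesis
    using sums_Suc[of "\<lambda>j. nb_pmf r p j * real j"] by simp
qed

lemma nb_excess_sums: "(\<lambda>j. nb_pmf r p j * max (real j - t) 0) sums nb_excess r p t"
proof -
  have "(\<lambda>j. nb_pmf r p j * real j + \<bar>t\<bar> * nb_pmf r p j) sums ((1 - p) * r / p + \<bar>t\<bar> * 1)"
    by (intro sums_add sums_mult nb_mean_sums nb_pmf_sums)
  moreover have "nb_pmf r p j * max (real j - t) 0 \<le> nb_pmf r p j * real j + \<bar>t\<bar> * nb_pmf r p j" for j
  proof -
    have "nb_pmf r p j * max (real j - t) 0 \<le> nb_pmf r p j * (real j + \<bar>t\<bar>)"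
      by (rule mult_left_mono) (auto simp: nb_pmf_nonneg)
    then show ?thesis
      by (simp add: algebra_simps)
  qed
  ultimately have "summable (\<lambda>j. nb_pmf r p j * max (real j - t) 0)"
    by (intro sums_comparison(1)) (auto simp: nb_pmf_nonneg)
  then show ?thesis
    unfolding nb_excess_def by (rule summable_sums)
qed

lemma nb_excess_nonneg: "0 \<le> nb_excess r p t"
  by (rule sums_le[OF _ sums_zero nb_excess_sums]) (simp add: nb_pmf_nonneg)

lemma nb_excess_le_mean:
  assumes "0 \<le> t"
  shows "nb_excess r p t \<le> (1 - p) * r / p"
  by (rule sums_le[OF _ nb_excess_sums nb_mean_sums]) (use assms in \<open>auto intro!: mult_left_mono nb_pmf_nonneg\<close>)

lemma nb_mean_le_excess: "(1 - p) * r / p - t \<le> nb_excess r p t"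
proof -
  have "(\<lambda>j. nb_pmf r p j * real j - t * nb_pmf r p j) sums ((1 - p) * r / p - t * 1)"
    by (intro sums_diff sums_mult nb_mean_sums nb_pmf_sums)
  then have mean_minus_t: "(\<lambda>j. nb_pmf r p j * real j - t * nb_pmf r p j) sums ((1 - p) * r / p - t)"
    by simp
  have "nb_pmf r p j * real j - t * nb_pmf r p j \<le> nb_pmf r p j * max (real j - t) 0" for j
  proof -
    have "nb_pmf r p j * (real j - t) \<le> nb_pmf r p j * max (real j - t) 0"
      by (rule mult_left_mono) (auto simp: nb_pmf_nonneg)
    then show ?thesis
      by (simp add: algebra_simps)
  qed
  then show ?thesis
    by (rule sums_le[OF _ mean_minus_t nb_excess_sums])
qed

lemma nb_excess_sums_from:
  assumes "real m \<le> t + 1"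
  shows "(\<lambda>i. nb_pmf r p (m + i) * max (real (m + i) - t) 0) sums nb_excess r p t"
proof -
  have "nb_pmf r p j * max (real j - t) 0 = 0" if "j < m" for j
    using that assms by auto
  then show ?thesis
    using sums_zero_iff_shift[of m "\<lambda>j. nb_pmf r p j * max (real j - t) 0"] nb_excess_sums
    by (simp add: add.commute)
qed

lemma nb_tail_sums: "(\<lambda>i. nb_pmf r p (n + i)) sums nb_tail r p n"
proof -
  have "summable (\<lambda>i. nb_pmf r p (i + n))"
    using sums_summable[OF nb_pmf_sums] by (rule summable_ignore_initial_segment)
  then show ?thesis
    unfolding nb_tail_def by (simp add: add.commute summable_sums)
qed

lemma nb_tail_Suc: "nb_tail r p n = nb_pmf r p n + nb_tail r p (Suc n)"
proof -
  have "(\<lambda>i. nb_pmf r p (n + Suc i)) sums nb_tail r p (Suc n)"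
    using nb_tail_sums[of "Suc n"] by simp
  from sums_unique2[OF nb_tail_sums[of n] sums_Suc[OF this]] show ?thesis
    by simp
qed

lemma nb_tail_excess:
  "p * nb_excess r p (real n) = (r + real n) * (1 - p) * nb_tail r p n - real n * nb_tail r p (Suc n)"
proof -
  define X where "X = nb_excess r p (real n)"
  have "(\<lambda>i. nb_pmf r p (Suc n + i) * real (Suc n + i))
      sums ((1 - p) * ((r + real n) * nb_tail r p n + X))"
  proof -
    have "(\<lambda>i. nb_pmf r p (n + i) * max (real (n + i) - real n) 0) sums X"
      unfolding X_def by (rule nb_excess_sums_from) simp
    then have "(\<lambda>i. (1 - p) * ((r + real n) * nb_pmf r p (n + i) + nb_pmf r p (n + i) * real i))
        sums ((1 - p) * ((r + real n) * nb_tail r p n + X))"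
      by (intro sums_mult sums_add nb_tail_sums) simp
    moreover have "nb_pmf r p (Suc n + i) * real (Suc n + i)
        = (1 - p) * ((r + real n) * nb_pmf r p (n + i) + nb_pmf r p (n + i) * real i)" for i
      using nb_pmf_Suc[of "n + i"] by (simp add: algebra_simps)
    ultimately show ?thesis
      by simp
  qed
  moreover have "(\<lambda>i. nb_pmf r p (Suc n + i) * real (Suc n + i)) sums (X + real n * nb_tail r p (Suc n))"
  proof -
    have "(\<lambda>i. nb_pmf r p (Suc n + i) * max (real (Suc n + i) - real n) 0) sums X"
      unfolding X_def by (rule nb_excess_sums_from) simp
    then have "(\<lambda>i. nb_pmf r p (Suc n + i) * real (Suc i) + real n * nb_pmf r p (Suc n + i))
        sums (X + real n * nb_tail r p (Suc n))"
      by (intro sums_add sums_mult nb_tail_sums) simp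
    then show ?thesis
      by (simp add: algebra_simps)
  qed
  ultimately have "X + real n * nb_tail r p (Suc n) = (1 - p) * ((r + real n) * nb_tail r p n + X)"
    by (rule sums_unique2[symmetric])
  then show ?thesis
    unfolding X_def[symmetric] by (simp add: algebra_simps)
qed

lemma nb_tail_quotient_step:
  assumes "1 \<le> k"
  shows "(A - nb_tail r p (Suc k)) / (real (Suc k) * nb_pmf r p (Suc k))
           - (A - nb_tail r p k) / (real k * nb_pmf r p k)
         = p * (A * (real k - (1 - p) * r / p) + nb_excess r p (real k))
             / (real k * real (Suc k) * nb_pmf r p (Suc k))"
proof -
  define D where "D = real k * real (Suc k) * nb_pmf r p (Suc k)"
  have "0 < real k" and nonzero: "(r + real k) * (1 - p) \<noteq> 0"
    using assms r_pos p_less_1 by auto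
  have "(A - nb_tail r p k) / (real k * nb_pmf r p k)
      = (r + real k) * (1 - p) * (A - nb_tail r p k) / ((r + real k) * (1 - p) * (real k * nb_pmf r p k))"
    by (rule mult_divide_mult_cancel_left[OF nonzero, symmetric])
  also have "(r + real k) * (1 - p) * (real k * nb_pmf r p k) = D"
    unfolding D_def using nb_pmf_Suc[of k] by (metis mult.assoc mult.left_commute)
  finally have "(A - nb_tail r p k) / (real k * nb_pmf r p k)
      = (r + real k) * (1 - p) * (A - nb_tail r p k) / D" .
  moreover have "(A - nb_tail r p (Suc k)) / (real (Suc k) * nb_pmf r p (Suc k))
      = real k * (A - nb_tail r p (Suc k)) / D"
    unfolding D_def using \<open>0 < real k\<close> by simp
  moreover have "real k * (A - nb_tail r p (Suc k)) - (r + real k) * (1 - p) * (A - nb_tail r p k)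
      = p * (A * (real k - (1 - p) * r / p) + nb_excess r p (real k))"
  proof -
    define m where "m = (1 - p) * r / p"
    have pm: "p * m = (1 - p) * r"
      unfolding m_def using p_pos by simp
    have "p * (A * (real k - m) + nb_excess r p (real k))
        = A * p * real k - A * (p * m) + p * nb_excess r p (real k)"
      by (simp add: algebra_simps)
    then show ?thesis
      unfolding m_def[symmetric] pm nb_tail_excess by (simp add: algebra_simps)
  qed
  ultimately show ?thesis
    unfolding D_def[symmetric] by (metis diff_divide_distrib)
qed

lemma g_term_eq:
  assumes "1 \<le> k"
  shows "g_term r p z k (k + i)
    = nb_pmf r p (k + i) / (real k * nb_pmf r p k) * (max (real (k + i) - z) 0 - nb_excess r p z)"
proof -
  have "pochhammer r (k + i) = pochhammer r k * pochhammer (r + real k) i"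
    by (rule pochhammer_product')
  moreover have "(fact (k + i) :: real) = real k * fact (k - 1) * pochhammer (real k + 1) i"
  proof -
    have "(fact (k + i) :: real) = pochhammer 1 k * pochhammer (1 + real k) i"
      unfolding pochhammer_fact by (rule pochhammer_product')
    moreover have "(fact k :: real) = real k * fact (k - 1)"
      using assms by (simp add: fact_reduce)
    ultimately show ?thesis
      by (simp add: pochhammer_fact[symmetric] add.commute)
  qed
  moreover have "nb_pmf r p (k + i)
      = nb_pmf r p k * pochhammer (r + real k) i * (1 - p) ^ i / pochhammer (real k + 1) i"
    using nb_pmf_shift[of k i] pochhammer_pos[of "real k + 1" i] by (simp add: eq_divide_eq)
  moreover have "0 < pochhammer r k" "0 < nb_pmf r p k" "0 < real k" "0 < pochhammer (real k + 1) i"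
    using r_pos assms nb_pmf_pos by (auto intro: pochhammer_pos)
  ultimately show ?thesis
    unfolding g_term_def by (simp add: field_simps)
qed

lemma g_z_eq_tail:
  assumes "1 \<le> n"
  shows "g_z r p z n = (nb_excess r p z * nb_tail r p n
      - (\<Sum>i. nb_pmf r p (n + i) * max (real (n + i) - z) 0)) / (real n * nb_pmf r p n)"
proof -
  define H where "H = (\<Sum>i. nb_pmf r p (n + i) * max (real (n + i) - z) 0)"
  have "summable (\<lambda>i. nb_pmf r p (i + n) * max (real (i + n) - z) 0)"
    using sums_summable[OF nb_excess_sums] by (rule summable_ignore_initial_segment)
  then have "(\<lambda>i. nb_pmf r p (n + i) * max (real (n + i) - z) 0) sums H"
    unfolding H_def by (simp add: add.commute summable_sums)
  then have "(\<lambda>i. (nb_pmf r p (n + i) * max (real (n + i) - z) 0 - nb_excess r p z * nb_pmf r p (n + i))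
      / (real n * nb_pmf r p n)) sums ((H - nb_excess r p z * nb_tail r p n) / (real n * nb_pmf r p n))"
    by (intro sums_divide sums_diff sums_mult nb_tail_sums)
  moreover have "g_term r p z n (n + i) = (nb_pmf r p (n + i) * max (real (n + i) - z) 0
      - nb_excess r p z * nb_pmf r p (n + i)) / (real n * nb_pmf r p n)" for i
    unfolding g_term_eq[OF assms] by (simp add: algebra_simps)
  ultimately have "(\<lambda>i. g_term r p z n (n + i))
      sums ((H - nb_excess r p z * nb_tail r p n) / (real n * nb_pmf r p n))"
    by (simp only:)
  then show ?thesis
    unfolding g_z_def H_def[symmetric] using assms by (simp add: sums_iff diff_divide_distrib)
qed

lemma pochhammer_2_eq_fact: "pochhammer 2 i = real (Suc i) * fact i"
proof -
  have "pochhammer 2 i = (fact (Suc i) :: real)"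
    using pochhammer_rec[of "1 :: real" i] by (simp add: pochhammer_fact)
  then show ?thesis
    by simp
qed

lemma nb_pmf_shift_Suc:
  "nb_pmf r p (Suc k + i) * pochhammer (real k + 2) i
    = nb_pmf r p (Suc k) * pochhammer (r + 1 + real k) i * (1 - p) ^ i"
  using nb_pmf_shift[of "Suc k" i] by (simp add: add_ac)

lemma nb_pmf_tail_le:
  assumes "1 \<le> r"
  shows "nb_pmf r p (Suc k + i) * real (Suc i)
    \<le> nb_pmf r p (Suc k) * (pochhammer (r + 1) i / fact i * (1 - p) ^ i)"
proof -
  define Q where "Q = pochhammer (real k + 2) i"
  have "0 < fact i * Q"
    unfolding Q_def by (simp add: pochhammer_pos)
  have "nb_pmf r p (Suc k + i) * real (Suc i) * (fact i * Q)
      = nb_pmf r p (Suc k) * (1 - p) ^ i * (pochhammer (r + 1 + real k) i * pochhammer 2 i)"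
    using nb_pmf_shift_Suc[of k i] unfolding Q_def pochhammer_2_eq_fact by (simp add: ac_simps)
  also have "\<dots> \<le> nb_pmf r p (Suc k) * (1 - p) ^ i * (pochhammer (r + 1) i * pochhammer (2 + real k) i)"
    using pochhammer_shift_mono[of 2 "r + 1" "real k" i] assms p_less_1
    by (intro mult_left_mono) (auto simp: nb_pmf_nonneg add_ac)
  also have "\<dots> = nb_pmf r p (Suc k) * (pochhammer (r + 1) i / fact i * (1 - p) ^ i) * (fact i * Q)"
    unfolding Q_def by (simp add: add_ac)
  finally show ?thesis
    using \<open>0 < fact i * Q\<close> by (rule mult_right_le_imp_le)
qed

lemma nb_pmf_tail_weighted_le:
  assumes "1 \<le> r" "1 \<le> k"
  shows "nb_pmf r p (Suc k + i) * real (Suc k + i) * real (Suc i)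
    \<le> real (Suc k) * nb_pmf r p (Suc k) * (pochhammer (r + 2) i / fact i * (1 - p) ^ i)"
proof -
  define Q where "Q = pochhammer (real k + 1) i"
  have "0 < fact i * Q"
    unfolding Q_def by (simp add: pochhammer_pos)
  have rising: "real (Suc k + i) * Q = real (Suc k) * pochhammer (real k + 2) i"
    using pochhammer_rec[of "real k + 1" i] pochhammer_Suc[of "real k + 1" i]
    unfolding Q_def by (simp add: add_ac)
  have "nb_pmf r p (Suc k + i) * real (Suc k + i) * real (Suc i) * (fact i * Q)
      = nb_pmf r p (Suc k + i) * (real (Suc k + i) * Q) * (real (Suc i) * fact i)"
    by (simp only: ac_simps)
  also have "\<dots> = real (Suc k) * (nb_pmf r p (Suc k + i) * pochhammer (real k + 2) i) * (real (Suc i) * fact i)"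
    unfolding rising by (simp only: ac_simps)
  also have "\<dots> = real (Suc k) * nb_pmf r p (Suc k) * (1 - p) ^ i
      * (pochhammer (r + 1 + real k) i * pochhammer 2 i)"
    unfolding nb_pmf_shift_Suc pochhammer_2_eq_fact by (simp only: ac_simps)
  also have "\<dots> \<le> real (Suc k) * nb_pmf r p (Suc k) * (1 - p) ^ i * (pochhammer (r + 2) i * Q)"
    using pochhammer_shift_mono[of 2 "r + 2" "real k - 1" i] assms p_less_1
    unfolding Q_def by (intro mult_left_mono) (auto simp: nb_pmf_nonneg algebra_simps)
  also have "\<dots> = real (Suc k) * nb_pmf r p (Suc k) * (pochhammer (r + 2) i / fact i * (1 - p) ^ i) * (fact i * Q)"
    by simp
  finally show ?thesis
    using \<open>0 < fact i * Q\<close> by (rule mult_right_le_imp_le)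
qed

lemma nb_excess_of_nat_le:
  assumes "1 \<le> r"
  shows "nb_excess r p (real k) \<le> nb_pmf r p (Suc k) * p powr (- (r + 1))"
proof -
  have "(\<lambda>i. nb_pmf r p (Suc k + i) * max (real (Suc k + i) - real k) 0) sums nb_excess r p (real k)"
    by (rule nb_excess_sums_from) simp
  then have "(\<lambda>i. nb_pmf r p (Suc k + i) * real (Suc i)) sums nb_excess r p (real k)"
    by simp
  moreover have "(\<lambda>i. nb_pmf r p (Suc k) * (pochhammer (r + 1) i / fact i * (1 - p) ^ i))
      sums (nb_pmf r p (Suc k) * p powr (- (r + 1)))"
    by (intro sums_mult negative_binomial_series p_pos p_less_1)
  ultimately show ?thesis
    by (rule sums_le[OF nb_pmf_tail_le[OF assms]])
qed

lemma nb_excess_scaled_le: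
  assumes "1 \<le> r" "1 \<le> k" "real k < z"
  shows "z * nb_excess r p z \<le> real (Suc k) * nb_pmf r p (Suc k) * p powr (- (r + 2))"
proof -
  define v where "v j = nb_pmf r p j * real j * max (real j - real k) 0" for j
  have bound_sums: "(\<lambda>i. real (Suc k) * nb_pmf r p (Suc k) * (pochhammer (r + 2) i / fact i * (1 - p) ^ i))
      sums (real (Suc k) * nb_pmf r p (Suc k) * p powr (- (r + 2)))"
    by (intro sums_mult negative_binomial_series p_pos p_less_1)
  have v_nonneg: "0 \<le> v (Suc k + i)" for i
    unfolding v_def by (simp add: nb_pmf_nonneg)
  have v_le_bound: "v (Suc k + i)
      \<le> real (Suc k) * nb_pmf r p (Suc k) * (pochhammer (r + 2) i / fact i * (1 - p) ^ i)" for i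
    unfolding v_def using nb_pmf_tail_weighted_le[OF assms(1,2), of i] by simp
  note v_tail = sums_comparison[OF v_nonneg v_le_bound bound_sums]
  have "v j = 0" if "j < Suc k" for j
    unfolding v_def using that by simp
  then have v_sums: "v sums (\<Sum>i. v (Suc k + i))"
    using sums_zero_iff_shift[of "Suc k" v] summable_sums[OF v_tail(1)] by (simp add: add.commute)
  have "z * max (real j - z) 0 * nb_pmf r p j \<le> v j" for j
  proof (cases "real j \<le> z")
    case False
    then have "z * max (real j - z) 0 \<le> real j * max (real j - real k) 0"
      using assms by (intro mult_mono) auto
    then have "z * max (real j - z) 0 * nb_pmf r p j \<le> real j * max (real j - real k) 0 * nb_pmf r p j"
      by (rule mult_right_mono) (rule nb_pmf_nonneg)
    then show ?thesis
      unfolding v_def by (simp only: ac_simps)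
  qed (simp add: v_def nb_pmf_nonneg)
  then have "z * nb_excess r p z \<le> (\<Sum>i. v (Suc k + i))"
    using sums_le[OF _ sums_mult[OF nb_excess_sums[of z], of z] v_sums] by (simp add: ac_simps)
  with v_tail(2) show ?thesis
    by linarith
qed

lemma g_z_below:
  assumes "1 \<le> n" "real n \<le> z + 1"
  shows "g_z r p z n = - nb_excess r p z * ((1 - nb_tail r p n) / (real n * nb_pmf r p n))"
proof -
  have "(\<Sum>i. nb_pmf r p (n + i) * max (real (n + i) - z) 0) = nb_excess r p z"
    using nb_excess_sums_from[OF assms(2)] by (rule sums_unique[symmetric])
  then show ?thesis
    unfolding g_z_eq_tail[OF assms(1)] by (simp add: algebra_simps diff_divide_distrib)
qed

lemma g_z_above:
  assumes "1 \<le> n" "z \<le> real n"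
  shows "g_z r p z n = - 1 / p
    + ((1 - p) * r / p - z - nb_excess r p z) * ((0 - nb_tail r p n) / (real n * nb_pmf r p n))"
proof -
  have "(\<lambda>i. nb_pmf r p (n + i) * max (real (n + i) - real n) 0) sums nb_excess r p (real n)"
    by (rule nb_excess_sums_from) simp
  then have "(\<lambda>i. nb_pmf r p (n + i) * real i + (real n - z) * nb_pmf r p (n + i))
      sums (nb_excess r p (real n) + (real n - z) * nb_tail r p n)"
    by (intro sums_add sums_mult nb_tail_sums) simp
  moreover have "nb_pmf r p (n + i) * max (real (n + i) - z) 0
      = nb_pmf r p (n + i) * real i + (real n - z) * nb_pmf r p (n + i)" for i
    using assms(2) by (simp add: algebra_simps)
  ultimately have H: "(\<Sum>i. nb_pmf r p (n + i) * max (real (n + i) - z) 0)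
      = nb_excess r p (real n) + (real n - z) * nb_tail r p n"
    by (simp add: sums_iff)
  define T where "T = nb_tail r p n"
  define P where "P = nb_pmf r p n"
  have X: "nb_excess r p (real n) = ((r + real n) * (1 - p) * T - real n * (T - P)) / p"
    unfolding T_def P_def using nb_tail_excess[of n] nb_tail_Suc[of n] p_pos by (simp add: field_simps)
  have "0 < real n" "0 < P"
    unfolding P_def using assms(1) nb_pmf_pos by auto
  then show ?thesis
    unfolding g_z_eq_tail[OF assms(1)] H X T_def[symmetric] P_def[symmetric]
    using p_pos by (simp add: field_simps)
qed

lemma g_z_diff_below:
  assumes "1 \<le> k" "real k < z"
  shows "g_z r p z (Suc k) - g_z r p z k = - nb_excess r p z
    * (p * (real k - (1 - p) * r / p + nb_excess r p (real k)) / (real k * real (Suc k) * nb_pmf r p (Suc k)))"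
proof -
  have "g_z r p z (Suc k) - g_z r p z k = - nb_excess r p z
      * ((1 - nb_tail r p (Suc k)) / (real (Suc k) * nb_pmf r p (Suc k)) - (1 - nb_tail r p k) / (real k * nb_pmf r p k))"
    using assms by (simp add: g_z_below algebra_simps)
  then show ?thesis
    unfolding nb_tail_quotient_step[OF assms(1)] by simp
qed

lemma g_z_diff_above:
  assumes "1 \<le> k" "z \<le> real k"
  shows "g_z r p z (Suc k) - g_z r p z k = ((1 - p) * r / p - z - nb_excess r p z)
    * (p * nb_excess r p (real k) / (real k * real (Suc k) * nb_pmf r p (Suc k)))"
proof -
  have "g_z r p z (Suc k) - g_z r p z k = ((1 - p) * r / p - z - nb_excess r p z)
      * ((0 - nb_tail r p (Suc k)) / (real (Suc k) * nb_pmf r p (Suc k)) - (0 - nb_tail r p k) / (real k * nb_pmf r p k))"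
    using assms by (simp only: g_z_above Suc_le_eq) (simp add: algebra_simps)
  then show ?thesis
    unfolding nb_tail_quotient_step[OF assms(1)] by simp
qed

lemma g_z_diff_bound_below:
  assumes "1 \<le> r" "1 \<le> k" "real k < z"
  shows "z * \<bar>g_z r p z (Suc k) - g_z r p z k\<bar> \<le> p powr (- (r + 1))"
proof -
  define D where "D = real k * real (Suc k) * nb_pmf r p (Suc k)"
  define d where "d = real k - (1 - p) * r / p + nb_excess r p (real k)"
  have "0 < D"
    unfolding D_def using assms(2) nb_pmf_pos by simp
  have "0 \<le> d" "d \<le> real k"
    unfolding d_def using nb_mean_le_excess[of "real k"] nb_excess_le_mean[of "real k"] by auto
  have "z * \<bar>g_z r p z (Suc k) - g_z r p z k\<bar> = (z * nb_excess r p z) * (p * d / D)"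
    unfolding g_z_diff_below[OF assms(2,3)] D_def[symmetric] d_def[symmetric]
    using \<open>0 \<le> d\<close> \<open>0 < D\<close> p_pos assms(3) nb_excess_nonneg by (simp add: abs_mult)
  also have "\<dots> \<le> (real (Suc k) * nb_pmf r p (Suc k) * p powr (- (r + 2))) * (p * real k / D)"
  proof (rule mult_mono)
    show "p * d / D \<le> p * real k / D"
      using \<open>d \<le> real k\<close> \<open>0 < D\<close> p_pos by (intro divide_right_mono mult_left_mono) auto
  qed (use nb_excess_scaled_le[OF assms] \<open>0 \<le> d\<close> \<open>0 < D\<close> p_pos nb_pmf_nonneg in auto)
  also have "\<dots> = p * p powr (- (r + 2))"
  proof -
    have cancel: "(a * y) * (p * x / (x * a)) = p * y" if "a \<noteq> 0" "x \<noteq> 0" for a x y :: real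
      using that by simp
    have "D = real k * (real (Suc k) * nb_pmf r p (Suc k))"
      unfolding D_def by (simp only: mult.assoc)
    then show ?thesis
      using cancel[of "real (Suc k) * nb_pmf r p (Suc k)" "real k"] assms(2) nb_pmf_pos[of "Suc k"] by simp
  qed
  finally show ?thesis
    unfolding powr_minus_mult_self[OF p_pos] .
qed

lemma g_z_diff_bound_above:
  assumes "1 \<le> r" "0 < z" "z \<le> real k"
  shows "z * \<bar>g_z r p z (Suc k) - g_z r p z k\<bar> \<le> p powr (- (r + 1))"
proof -
  have "1 \<le> k"
    using assms by simp
  define D where "D = real k * real (Suc k) * nb_pmf r p (Suc k)"
  define \<mu> where "\<mu> = (1 - p) * r / p - z - nb_excess r p z"
  have "0 < D"
    unfolding D_def using \<open>1 \<le> k\<close> nb_pmf_pos by simp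
  have "\<bar>\<mu>\<bar> \<le> z"
    unfolding \<mu>_def using nb_mean_le_excess[of z] nb_excess_le_mean[of z] assms(2) by auto
  have "z * \<bar>g_z r p z (Suc k) - g_z r p z k\<bar> = z * \<bar>\<mu>\<bar> * (p * nb_excess r p (real k) / D)"
    unfolding g_z_diff_above[OF \<open>1 \<le> k\<close> assms(3)] D_def[symmetric] \<mu>_def[symmetric]
    using \<open>0 < D\<close> p_pos assms(2) nb_excess_nonneg by (simp add: abs_mult)
  also have "\<dots> \<le> (real k * real (Suc k)) * (p * nb_excess r p (real k) / D)"
    using \<open>\<bar>\<mu>\<bar> \<le> z\<close> assms(2,3) \<open>0 < D\<close> p_pos nb_excess_nonneg
    by (intro mult_right_mono mult_mono) auto
  also have "\<dots> = p * nb_excess r p (real k) / nb_pmf r p (Suc k)"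
    unfolding D_def using \<open>1 \<le> k\<close> by simp
  also have "\<dots> \<le> p * (nb_pmf r p (Suc k) * p powr (- (r + 1))) / nb_pmf r p (Suc k)"
    using nb_excess_of_nat_le[OF assms(1)] p_pos nb_pmf_pos
    by (intro divide_right_mono mult_left_mono) (auto simp: less_imp_le)
  also have "\<dots> = p * p powr (- (r + 1))"
    using nb_pmf_pos[of "Suc k"] by simp
  also have "\<dots> \<le> p powr (- (r + 1))"
    using p_pos p_less_1 by (intro mult_left_le_one_le) auto
  finally show ?thesis .
qed

lemma g_z_diff_bound:
  assumes "1 \<le> r" "0 < z" "1 \<le> k"
  shows "\<bar>g_z r p z (k + 1) - g_z r p z k\<bar> \<le> p powr (- (r + 1)) / z"
proof -
  have "z * \<bar>g_z r p z (Suc k) - g_z r p z k\<bar> \<le> p powr (- (r + 1))"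
    using g_z_diff_bound_below[OF assms(1,3)] g_z_diff_bound_above[OF assms(1,2)]
    by (cases "real k < z") auto
  then show ?thesis
    using assms(2) by (simp add: field_simps)
qed

end

lemma powr_minus_case_bounds:
  fixes p r :: real
  assumes "0 < p" "p < 1" "0 \<le> r"
  shows "p powr (- (r + 1)) \<le> 2 * p powr (- (r + 1)) - 1 / p"
    and "p powr (- (r + 1)) \<le> (1 + 1 / (1 - p)) * p powr (- (r + 2)) - 1 / p ^ 2"
    and "p powr (- (r + 1)) \<le> 2 * p powr (- (r + 2)) - 1 / p ^ 2"
proof -
  define P where "P = p powr (- (r + 1))"
  define Q where "Q = p powr (- (r + 2))"
  have "p powr (- 1) \<le> P"
    unfolding P_def using assms by (intro powr_mono') auto
  then have inv_p: "1 / p \<le> P"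
    using assms(1) by (simp add: powr_minus_divide)
  have "p powr (- 2) \<le> Q"
    unfolding Q_def using assms by (intro powr_mono') auto
  then have inv_p2: "1 / p ^ 2 \<le> Q"
    using assms(1) by (simp add: powr_minus_divide powr_realpow)
  have "Q = P / p"
    unfolding P_def Q_def using powr_minus_mult_self[OF assms(1), of r] assms(1) by (simp add: field_simps)
  moreover have "0 < Q"
    unfolding Q_def using assms(1) by simp
  ultimately have "P \<le> Q" "Q \<le> Q / (1 - p)"
    using assms(1,2) by (auto simp: field_simps)
  with inv_p inv_p2 show "P \<le> 2 * P - 1 / p" "P \<le> (1 + 1 / (1 - p)) * Q - 1 / p ^ 2"
    "P \<le> 2 * Q - 1 / p ^ 2"
    by (auto simp: algebra_simps)
qed

theorem lemma2p2:
  fixes r p z :: real and k :: nat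
  assumes "r > 1" and "0 < p" and "p < 1" and "z > 1" and "k \<ge> 1"
  shows "\<bar>g_z r p z (k + 1) - g_z r p z k\<bar> \<le>
           (if real k \<ge> z then (1 / z) * (2 * p powr (-(r + 1)) - 1 / p)
            else if 2 \<le> k then (1 / z) * ((1 + 1 / (1 - p)) * p powr (-(r + 2)) - 1 / p ^ 2)
            else ((r + 1) / z) * (2 * p powr (-(r + 2)) - 1 / p ^ 2))
       \<and> \<bar>g_z r p z (k + 1) - g_z r p z k\<bar> \<le>
           ((r + 1) / z) * ((1 + 1 / (1 - p)) * p powr (-(r + 2)) - 1 / p ^ 2)"
proof -
  have diff: "\<bar>g_z r p z (k + 1) - g_z r p z k\<bar> \<le> p powr (- (r + 1)) / z"
    using assms by (intro g_z_diff_bound) auto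
  have scaled: "\<bar>g_z r p z (k + 1) - g_z r p z k\<bar> \<le> (c / z) * X"
    if "p powr (- (r + 1)) \<le> X" "1 \<le> c" for c X
  proof -
    have "0 \<le> X"
      using that(1) by (meson order_trans powr_ge_zero)
    then have "p powr (- (r + 1)) \<le> c * X"
      using that mult_right_mono[OF that(2)] by fastforce
    then have "p powr (- (r + 1)) / z \<le> (c / z) * X"
      using assms(4) by (simp add: divide_right_mono)
    with diff show ?thesis
      by linarith
  qed
  note bounds = powr_minus_case_bounds[OF assms(2,3), of r]
  show ?thesis
    using scaled[OF bounds(1), of 1] scaled[OF bounds(2), of 1] scaled[OF bounds(3), of "r + 1"]
      scaled[OF bounds(2), of "r + 1"] assms(1)
    by auto
qed

end
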